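(* For all $n\geq 0$, $$m_n=\sum_{k=0}^{n}\binom{n}{k}d_k,$$ where $d_k$ is the number of symmetric Dyck paths of length $2k$ and $m_n$ is the number of symmetric Motzkin paths of length $2n$.
   Context: Steps: $U=(1,1)$, $D=(1,-1)$, $h=(1,0)$. A Dyck path of length $2n$ is a lattice path from $(0,0)$ to $(2n,0)$ using steps $U,D$ that never goes below the $x$-axis; a Motzkin path of length $2n$ is the same but steps $U,D,h$ are allowed. Such a path with step sequence $s_1s_2\cdots s_{2n}$ is symmetric if for every $i$, $s_{2n+1-i}$ is the mirror of $s_i$, where the mirror of $U$ is $D$, of $D$ is $U$, and of $h$ is $h$ (i.e. the path is invariant under reflection in the line $x=n$). $d_n$ denotes the number of symmetric Dyck paths of length $2n$ (so $d_n=\binom{n}{\lfloor n/2\rfloor}$) and $m_n$ the number of symmetric Motzkin paths of length $2n$. *)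

theory Defs
  imports Main
begin

datatype step = U | D | H

fun stepval :: "step \<Rightarrow> int" where
  "stepval U = 1" | "stepval D = -1" | "stepval H = 0"

fun mirror :: "step \<Rightarrow> step" where
  "mirror U = D" | "mirror D = U" | "mirror H = H"

definition height :: "step list \<Rightarrow> nat \<Rightarrow> int" where
  "height p i = (\<Sum>j<i. stepval (p ! j))"

definition nonneg_path :: "step list \<Rightarrow> bool" where
  "nonneg_path p \<longleftrightarrow> (\<forall>i\<le>length p. height p i \<ge> 0) \<and> height p (length p) = 0"

definition dyck_path :: "nat \<Rightarrow> step list \<Rightarrow> bool" where
  "dyck_path n p \<longleftrightarrow> length p = 2*n \<and> set p \<subseteq> {U, D} \<and> nonneg_path p"

definition motzkin_path :: "nat \<Rightarrow> step list \<Rightarrow> bool" where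
  "motzkin_path n p \<longleftrightarrow> length p = 2*n \<and> nonneg_path p"

(* s_{2n+1-i} = mirror s_i for all i (1-based); here 0-based *)
definition symmetric :: "step list \<Rightarrow> bool" where
  "symmetric p \<longleftrightarrow> (\<forall>i<length p. p ! (length p - 1 - i) = mirror (p ! i))"

definition d :: "nat \<Rightarrow> nat" where
  "d n = card {p. dyck_path n p \<and> symmetric p}"

definition m :: "nat \<Rightarrow> nat" where
  "m n = card {p. motzkin_path n p \<and> symmetric p}"

end

theory Submission
  imports Defs
begin

text \<open>
  By symmetry a symmetric path of length \<open>2n\<close> returns to height 0 and attains the same heights
  on both halves, so it is determined by its first half, which can be any step word of
  length \<open>n\<close> that never goes below 0 (a meander). Both \<open>m n\<close> and \<open>d n\<close> therefore count
  meanders of length \<open>n\<close>. Deleting the horizontal steps of a Motzkin meander leaves a Dyck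
  meander, and choosing the positions of the \<open>k\<close> non-horizontal steps gives the binomial
  factor; in the proof this appears as Pascal's rule matching the first-step recurrences of
  the two meander counts.
\<close>

definition stays_nonneg :: "int \<Rightarrow> step list \<Rightarrow> bool" where
  "stays_nonneg h xs \<longleftrightarrow> (\<forall>i\<le>length xs. 0 \<le> h + height xs i)"

definition double_path :: "step list \<Rightarrow> step list" where
  "double_path q = q @ rev (map mirror q)"

fun walks :: "step list \<Rightarrow> nat \<Rightarrow> int \<Rightarrow> step list list" where
  "walks ss 0 h = [[]]"
| "walks ss (Suc n) h =
     concat (map (\<lambda>s. map (Cons s) (walks ss n (h + stepval s)))
       (filter (\<lambda>s. 0 \<le> h + stepval s) ss))"

lemma mirror_mirror [simp]: "mirror (mirror x) = x"
  by (cases x) auto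

lemma stepval_mirror [simp]: "stepval (mirror x) = - stepval x"
  by (cases x) auto

lemma UNIV_step: "{U, D, H} = UNIV"
  using step.exhaust by auto

lemma height_0 [simp]: "height p 0 = 0"
  by (simp add: height_def)

lemma height_Cons_Suc [simp]: "height (x # xs) (Suc i) = stepval x + height xs i"
  unfolding height_def sum.lessThan_Suc_shift by simp

lemma height_eq_sum_take: "i \<le> length p \<Longrightarrow> height p i = sum_list (map stepval (take i p))"
proof (induction p arbitrary: i)
  case (Cons x p)
  then show ?case by (cases i) auto
qed simp

lemma height_take: "i \<le> k \<Longrightarrow> height (take k p) i = height p i"
  unfolding height_def by (intro sum.cong) auto

lemma stays_nonneg_Nil [simp]: "stays_nonneg h [] \<longleftrightarrow> 0 \<le> h"
  by (simp add: stays_nonneg_def)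

lemma stays_nonneg_nonneg: "stays_nonneg h xs \<Longrightarrow> 0 \<le> h"
  by (auto simp: stays_nonneg_def)

lemma all_le_Suc_conv: "(\<forall>i\<le>Suc n. P i) \<longleftrightarrow> P 0 \<and> (\<forall>i\<le>n. P (Suc i))"
  by (metis Suc_le_mono le0 not0_implies_Suc)

lemma stays_nonneg_Cons [simp]:
  "stays_nonneg h (x # xs) \<longleftrightarrow> 0 \<le> h \<and> stays_nonneg (h + stepval x) xs"
  unfolding stays_nonneg_def by (simp only: length_Cons all_le_Suc_conv) (simp add: add.assoc)

lemma symmetric_iff_rev: "symmetric p \<longleftrightarrow> rev p = map mirror p"
proof
  assume "symmetric p"
  then show "rev p = map mirror p"
    by (intro nth_equalityI) (auto simp: symmetric_def rev_nth)
next
  assume rev: "rev p = map mirror p"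
  show "symmetric p"
    unfolding symmetric_def
  proof (intro allI impI)
    fix i assume i: "i < length p"
    then have "p ! (length p - 1 - i) = rev p ! i" by (simp add: rev_nth)
    also have "\<dots> = mirror (p ! i)" using i by (simp add: rev)
    finally show "p ! (length p - 1 - i) = mirror (p ! i)" .
  qed
qed

lemma sum_stepval_map_mirror: "sum_list (map stepval (map mirror p)) = - sum_list (map stepval p)"
  by (induction p) auto

lemma sum_take_drop: "sum_list (map f (take k xs)) + sum_list (map f (drop k xs)) = sum_list (map f xs)"
  by (simp flip: sum_list_append map_append)

lemma height_length_symmetric:
  assumes "symmetric p" shows "height p (length p) = 0"
proof -
  have "sum_list (map stepval p) = sum_list (map stepval (rev p))" by (simp add: rev_map[symmetric])
  also have "rev p = map mirror p" using assms by (simp add: symmetric_iff_rev)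
  also have "sum_list (map stepval (map mirror p)) = - sum_list (map stepval p)"
    by (rule sum_stepval_map_mirror)
  finally show ?thesis by (simp add: height_eq_sum_take)
qed

lemma height_symmetric:
  assumes "symmetric p" "i \<le> length p"
  shows "height p (length p - i) = height p i"
proof -
  have "rev (drop (length p - i) p) = take i (rev p)" by (simp add: take_rev)
  also have "rev p = map mirror p" using assms(1) by (simp add: symmetric_iff_rev)
  finally have "rev (drop (length p - i) p) = map mirror (take i p)" by (simp add: take_map)
  then have "sum_list (map stepval (drop (length p - i) p)) = - sum_list (map stepval (take i p))"
    by (metis rev_map sum_list_rev sum_stepval_map_mirror)
  then show ?thesis
    using assms height_length_symmetric[OF assms(1)] sum_take_drop[of stepval "length p - i" p]
    by (simp add: height_eq_sum_take)
qed

lemma nonneg_path_symmetric_iff: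
  assumes "symmetric p" "length p = 2 * n"
  shows "nonneg_path p \<longleftrightarrow> stays_nonneg 0 (take n p)"
proof -
  have "(\<forall>i\<le>length p. 0 \<le> height p i) \<longleftrightarrow> (\<forall>i\<le>n. 0 \<le> height p i)"
  proof (intro iffI allI impI)
    fix i assume nonneg: "\<forall>i\<le>n. 0 \<le> height p i" and "i \<le> length p"
    show "0 \<le> height p i"
    proof (cases "i \<le> n")
      case False
      then have "height p i = height p (length p - i)"
        using assms \<open>i \<le> length p\<close> height_symmetric[OF assms(1), of "length p - i"] by simp
      then show ?thesis using nonneg False assms(2) by simp
    qed (use nonneg in simp)
  qed (use assms(2) in simp)
  moreover have "height p (length p) = 0" using assms(1) by (rule height_length_symmetric)
  ultimately show ?thesis using assms(2)
    by (simp add: nonneg_path_def stays_nonneg_def height_take min_def)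
qed

lemma length_double_path [simp]: "length (double_path q) = 2 * length q"
  by (simp add: double_path_def)

lemma take_double_path [simp]: "take (length q) (double_path q) = q"
  by (simp add: double_path_def)

lemma symmetric_double_path: "symmetric (double_path q)"
  by (simp add: symmetric_iff_rev double_path_def rev_map comp_def)

lemma double_path_take:
  assumes "symmetric p" "length p = 2 * n"
  shows "double_path (take n p) = p"
proof -
  have "rev (take n p @ drop n p) = map mirror (take n p @ drop n p)"
    using assms(1) by (simp add: symmetric_iff_rev)
  then have "rev (drop n p) @ rev (take n p) = map mirror (take n p) @ map mirror (drop n p)"
    by (simp only: rev_append map_append)
  then have "rev (drop n p) = map mirror (take n p)"
    using assms(2) by simp
  then have "drop n p = rev (map mirror (take n p))"
    by (metis rev_rev_ident)
  then show ?thesis unfolding double_path_def by (metis append_take_drop_id)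
qed

lemma card_symmetric_nonneg_paths:
  assumes "mirror ` A \<subseteq> A"
  shows "card {p. length p = 2 * n \<and> set p \<subseteq> A \<and> nonneg_path p \<and> symmetric p}
       = card {q. length q = n \<and> set q \<subseteq> A \<and> stays_nonneg 0 q}"
  (is "card ?P = card ?Q")
proof (rule bij_betw_same_card[of "take n"], rule bij_betw_byWitness[where f' = double_path])
  show "take n ` ?P \<subseteq> ?Q"
    by (auto simp: nonneg_path_symmetric_iff dest: in_set_takeD)
  have "double_path q \<in> ?P" if "q \<in> ?Q" for q
  proof -
    from that have q: "length q = n" "set q \<subseteq> A" "stays_nonneg 0 q" by simp_all
    have len: "length (double_path q) = 2 * n" using q(1) by simp
    then have "nonneg_path (double_path q)"
      using q nonneg_path_symmetric_iff[OF symmetric_double_path len] by auto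
    moreover have "set (double_path q) \<subseteq> A" using q(2) assms by (auto simp: double_path_def)
    ultimately show "double_path q \<in> ?P" using len symmetric_double_path by blast
  qed
  then show "double_path ` ?Q \<subseteq> ?P" by blast
qed (auto simp: double_path_take)

lemma set_walks:
  "0 \<le> h \<Longrightarrow> set (walks ss n h) = {xs. length xs = n \<and> set xs \<subseteq> set ss \<and> stays_nonneg h xs}"
proof (induction n arbitrary: h)
  case (Suc n)
  show ?case
  proof (intro set_eqI iffI)
    fix xs assume "xs \<in> {xs. length xs = Suc n \<and> set xs \<subseteq> set ss \<and> stays_nonneg h xs}"
    then obtain x ys where "xs = x # ys" "length ys = n" "x \<in> set ss" "set ys \<subseteq> set ss"
      "stays_nonneg (h + stepval x) ys" "0 \<le> h + stepval x"
      by (cases xs) (auto dest: stays_nonneg_nonneg)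
    then show "xs \<in> set (walks ss (Suc n) h)" using Suc.IH by force
  qed (use Suc in auto)
qed auto

lemma distinct_concat_map_Cons:
  "distinct xs \<Longrightarrow> (\<And>x. x \<in> set xs \<Longrightarrow> distinct (f x))
    \<Longrightarrow> distinct (concat (map (\<lambda>x. map (Cons x) (f x)) xs))"
  by (induction xs) (auto simp: distinct_map)

lemma distinct_walks: "distinct ss \<Longrightarrow> distinct (walks ss n h)"
  by (induction n arbitrary: h) (auto intro: distinct_concat_map_Cons)

lemma card_nonneg_eq_length_walks:
  "distinct ss \<Longrightarrow> card {xs. length xs = n \<and> set xs \<subseteq> set ss \<and> stays_nonneg 0 xs}
     = length (walks ss n 0)"
  using distinct_card[OF distinct_walks] by (simp flip: set_walks)

lemma sum_Suc_choose_mult: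
  fixes f :: "nat \<Rightarrow> nat"
  shows "(\<Sum>k\<le>Suc n. (Suc n choose k) * f k)
       = (\<Sum>k\<le>n. (n choose k) * f k) + (\<Sum>k\<le>n. (n choose k) * f (Suc k))"
proof -
  have "(\<Sum>k\<le>Suc n. (Suc n choose k) * f k)
      = (f 0 + (\<Sum>k\<le>n. (n choose Suc k) * f (Suc k))) + (\<Sum>k\<le>n. (n choose k) * f (Suc k))"
    by (subst sum.atMost_Suc_shift) (simp add: algebra_simps sum.distrib)
  also have "f 0 + (\<Sum>k\<le>n. (n choose Suc k) * f (Suc k)) = (\<Sum>k\<le>Suc n. (n choose k) * f k)"
    by (subst sum.atMost_Suc_shift) simp
  finally show ?thesis by simp
qed

lemma length_motzkin_walks:
  "0 \<le> h \<Longrightarrow> length (walks [U, D, H] n h) = (\<Sum>k\<le>n. (n choose k) * length (walks [U, D] k h))"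
proof (induction n arbitrary: h)
  case (Suc n)
  define W where "W k g = length (walks [U, D] k g)" for k g
  have W_Suc: "W (Suc k) h = W k (h + 1) + (if 0 \<le> h - 1 then W k (h - 1) else 0)" for k
    using Suc.prems by (simp add: W_def)
  have "(\<Sum>k\<le>Suc n. (Suc n choose k) * W k h)
      = (\<Sum>k\<le>n. (n choose k) * W k h) + (\<Sum>k\<le>n. (n choose k) * W (Suc k) h)"
    by (rule sum_Suc_choose_mult)
  also have "\<dots> = length (walks [U, D, H] n h) + length (walks [U, D, H] n (h + 1))
      + (if 0 \<le> h - 1 then length (walks [U, D, H] n (h - 1)) else 0)"
    using Suc by (simp add: W_Suc W_def sum.distrib distrib_left)
  also have "\<dots> = length (walks [U, D, H] (Suc n) h)"
    using Suc.prems by simp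
  finally show ?case by (simp add: W_def)
qed simp

theorem theorem3p1:
  fixes n :: nat
  shows "m n = (\<Sum>k=0..n. (n choose k) * d k)"
proof -
  have "m n = length (walks [U, D, H] n 0)"
    using card_symmetric_nonneg_paths[of UNIV n] card_nonneg_eq_length_walks[of "[U, D, H]" n]
    by (simp add: m_def motzkin_path_def UNIV_step conj_commute conj_left_commute)
  moreover have "d k = length (walks [U, D] k 0)" for k
    using card_symmetric_nonneg_paths[of "{U, D}" k] card_nonneg_eq_length_walks[of "[U, D]" k]
    by (simp add: d_def dyck_path_def conj_commute conj_left_commute)
  ultimately show ?thesis by (simp add: length_motzkin_walks atLeast0AtMost)
qed

end
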